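(* Let $\mathbb{K}$ be a field of characteristic zero and let $\mathbb{K}(x)[S_x]$ be the ring of linear recurrence operators, in which $S_x\, a(x) = a(x+1)\, S_x$ for $a\in\mathbb{K}(x)$. Let $m$ be a positive integer and let $L\in\mathbb{K}(x)[S_x]$ be nonzero, with $m$-exponent separation $L=L_0+L_1+\cdots+L_{m-1}$, where $L_i=\sum_{j=0}^{r_i}\ell_{i,j}S_x^{jm+i}$ with $\ell_{i,j}\in\mathbb{K}(x)$. Let $\mathcal{L}_m$ be the $m\times m$ matrix over $\mathbb{K}(x)[S_x]$ whose entry in row $i$ and column $j$ (indices $0\le i,j\le m-1$) is $L_{(i-j)\bmod m}$, i.e. its first row is $L_0, L_{m-1}, L_{m-2},\ldots,L_1$, its second row is $L_1,L_0,L_{m-1},\ldots,L_2$, and its last row is $L_{m-1},L_{m-2},\ldots,L_0$. Suppose $T_0,\ldots,T_{m-1}\in\mathbb{K}(x)[S_x]$ satisfy $[T_0,\ldots,T_{m-1}]\cdot\mathcal{L}_m=0$, i.e. $\sum_{i=0}^{m-1}T_i L_{(i-j)\bmod m}=0$ for every $j=0,\ldots,m-1$. Then $T_0+T_1+\cdots+T_{m-1}=0$.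
   Context: Products of operators are taken in the noncommutative ring $\mathbb{K}(x)[S_x]$, and the product of a row vector by a matrix is computed with the row entries multiplied on the left. *)

theory Defs
  imports "HOL-Computational_Algebra.Computational_Algebra"
begin

text \<open>The rational function field K(x) is modelled as the fraction field
  'a poly fract of K[x].  The shift automorphism sigma maps a(x) to a(x+1).\<close>

definition rshift :: "'a::field_char_0 poly fract \<Rightarrow> 'a poly fract" where
  "rshift f = (SOME g. \<exists>p q. q \<noteq> 0 \<and> f = Fract p q \<and>
       g = Fract (pcompose p [:1, 1:]) (pcompose q [:1, 1:]))"

text \<open>A recurrence operator sum_n c_n S_x^n in K(x)[S_x] is represented by its
  coefficient sequence c :: nat => K(x), required to have finite support.\<close>

definition is_op :: "(nat \<Rightarrow> 'a::field_char_0 poly fract) \<Rightarrow> bool" where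
  "is_op A \<longleftrightarrow> finite {n. A n \<noteq> 0}"

text \<open>Product in the Ore algebra, using S_x a = sigma(a) S_x:
  (A*B)_n = sum_{i<=n} A_i sigma^i(B_{n-i}).\<close>

definition ore_mult :: "(nat \<Rightarrow> 'a::field_char_0 poly fract) \<Rightarrow> (nat \<Rightarrow> 'a poly fract)
    \<Rightarrow> (nat \<Rightarrow> 'a poly fract)" where
  "ore_mult A B = (\<lambda>n. \<Sum>i\<le>n. A i * (rshift ^^ i) (B (n - i)))"

definition exp_sep :: "nat \<Rightarrow> (nat \<Rightarrow> 'a::field_char_0 poly fract) \<Rightarrow> nat
    \<Rightarrow> (nat \<Rightarrow> 'a poly fract)" where
  "exp_sep m L i = (\<lambda>n. if n mod m = i then L n else 0)"

end

theory Submission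
  imports Defs
begin

text \<open>Summing the hypothesis over the columns \<open>j\<close> collapses the exponent separation: for
  fixed \<open>i\<close>, the entries \<open>L_((i - j) mod m)\<close> run through all components of \<open>L\<close>, whose
  sum is \<open>L\<close>.  The Ore product is biadditive because the shift \<open>\<sigma>\<close> is additive, so
  \<open>(T_0 + ... + T_(m-1)) L = 0\<close>.  Since \<open>\<sigma>\<close> is injective, the leading coefficient of a
  product is the nonzero \<open>a \<sigma>\<^sup>k(b)\<close>, so the operator ring has no zero divisors and
  \<open>L \<noteq> 0\<close> forces \<open>T_0 + ... + T_(m-1) = 0\<close>.\<close>

lemma pcompose_shift_eq_0_iff [simp]:
  "pcompose p [:1, 1:] = 0 \<longleftrightarrow> p = (0 :: 'a::field_char_0 poly)"
  by (simp add: pcompose_eq_0_iff)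

lemma rshift_Fract:
  fixes p q :: "'a::field_char_0 poly"
  assumes "q \<noteq> 0"
  shows "rshift (Fract p q) = Fract (pcompose p [:1, 1:]) (pcompose q [:1, 1:])"
proof -
  have "\<exists>g. \<exists>p' q'. q' \<noteq> 0 \<and> Fract p q = Fract p' q' \<and>
      g = Fract (pcompose p' [:1, 1:]) (pcompose q' [:1, 1:])"
    using assms by blast
  from someI_ex[OF this] obtain p' q' where
    "q' \<noteq> 0" "Fract p q = Fract p' q'"
    "rshift (Fract p q) = Fract (pcompose p' [:1, 1:]) (pcompose q' [:1, 1:])"
    unfolding rshift_def by blast
  moreover from this have "p * q' = p' * q" using assms by (simp add: eq_fract)
  then have "pcompose p [:1, 1:] * pcompose q' [:1, 1:] = pcompose p' [:1, 1:] * pcompose q [:1, 1:]"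
    by (metis pcompose_mult)
  ultimately show ?thesis
    using assms by (simp add: eq_fract)
qed

lemma rshift_add:
  "rshift (f + g) = rshift f + rshift (g :: 'a::field_char_0 poly fract)"
proof -
  obtain a b where f: "f = Fract a b" "b \<noteq> 0" by (cases f) auto
  obtain c d where g: "g = Fract c d" "d \<noteq> 0" by (cases g) auto
  show ?thesis
    using f g by (simp add: rshift_Fract pcompose_add pcompose_mult)
qed

lemma rshift_eq_0_iff [simp]: "rshift f = 0 \<longleftrightarrow> f = (0 :: 'a::field_char_0 poly fract)"
proof -
  obtain p q where "f = Fract p q" "q \<noteq> 0" by (cases f) auto
  then show ?thesis
    by (simp add: rshift_Fract Zero_fract_def eq_fract)
qed

lemma funpow_rshift_eq_0_iff [simp]:
  "(rshift ^^ k) f = 0 \<longleftrightarrow> f = (0 :: 'a::field_char_0 poly fract)"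
  by (induction k) simp_all

lemma funpow_rshift_sum:
  "(rshift ^^ k) (\<Sum>j\<in>J. f j) = (\<Sum>j\<in>J. (rshift ^^ k) (f j :: 'a::field_char_0 poly fract))"
proof -
  have "(rshift ^^ k) (x + y) = (rshift ^^ k) x + (rshift ^^ k) y" for x y :: "'a poly fract"
    by (induction k) (simp_all add: rshift_add)
  then show ?thesis
    using sum_comp_morphism[of "rshift ^^ k" f J] by (simp add: comp_def)
qed

lemma ore_mult_sum_left:
  "ore_mult (\<lambda>k. \<Sum>i\<in>I. A i k) B n = (\<Sum>i\<in>I. ore_mult (A i) B n)"
  unfolding ore_mult_def sum_distrib_right by (rule sum.swap)

lemma ore_mult_sum_right:
  "ore_mult A (\<lambda>k. \<Sum>j\<in>J. B j k) n = (\<Sum>j\<in>J. ore_mult A (B j) n)"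
  unfolding ore_mult_def funpow_rshift_sum sum_distrib_left by (rule sum.swap)

lemma is_op_sum:
  assumes "finite I" and "\<forall>i\<in>I. is_op (A i)"
  shows "is_op (\<lambda>k. \<Sum>i\<in>I. A i k)"
proof -
  have "{k. (\<Sum>i\<in>I. A i k) \<noteq> 0} \<subseteq> (\<Union>i\<in>I. {k. A i k \<noteq> 0})"
    by (auto intro: ccontr)
  then show ?thesis
    using assms by (auto simp: is_op_def intro: finite_subset)
qed

lemma ore_mult_leading_coeff:
  assumes "\<forall>k>a. A k = 0" and "\<forall>k>b. B k = 0"
  shows "ore_mult A B (a + b) = A a * (rshift ^^ a) (B b)"
proof -
  have "ore_mult A B (a + b) = A a * (rshift ^^ a) (B (a + b - a))
      + (\<Sum>k\<in>{..a + b} - {a}. A k * (rshift ^^ k) (B (a + b - k)))"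
    unfolding ore_mult_def by (rule sum.remove) auto
  also have "(\<Sum>k\<in>{..a + b} - {a}. A k * (rshift ^^ k) (B (a + b - k))) = 0"
  proof (rule sum.neutral, intro ballI)
    fix k assume "k \<in> {..a + b} - {a}"
    then have "a < k \<or> b < a + b - k" by auto
    then show "A k * (rshift ^^ k) (B (a + b - k)) = 0" using assms by auto
  qed
  finally show ?thesis by simp
qed

lemma is_op_obtain_degree:
  assumes "is_op A" and "A n \<noteq> 0"
  obtains d where "A d \<noteq> 0" and "\<forall>k>d. A k = 0"
proof
  let ?S = "{k. A k \<noteq> 0}"
  have "finite ?S" "?S \<noteq> {}" using assms by (auto simp: is_op_def)
  then show "A (Max ?S) \<noteq> 0" and "\<forall>k>Max ?S. A k = 0"
    using Max_in[of ?S] Max_ge[of ?S] by (auto simp: leD)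
qed

lemma ore_mult_eq_0_imp_left_eq_0:
  assumes "is_op A" and "is_op B" and "\<exists>n. B n \<noteq> 0"
    and "\<forall>n. ore_mult A B n = 0"
  shows "A n = 0"
proof (rule ccontr)
  assume "A n \<noteq> 0"
  with assms(1) obtain a where "A a \<noteq> 0" "\<forall>k>a. A k = 0"
    by (rule is_op_obtain_degree)
  moreover obtain b where "B b \<noteq> 0" "\<forall>k>b. B k = 0"
    using assms(2,3) is_op_obtain_degree by metis
  ultimately have "ore_mult A B (a + b) \<noteq> 0"
    by (simp add: ore_mult_leading_coeff)
  then show False using assms(4) by simp
qed

lemma sum_exp_sep: "m > 0 \<Longrightarrow> (\<Sum>r<m. exp_sep m L r n) = L n"
  by (simp add: exp_sep_def)

lemma cyclic_difference_involution:
  fixes i j m :: nat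
  assumes "i < m" and "j < m"
  shows "(i + m - (i + m - j) mod m) mod m = j"
proof (cases "j \<le> i")
  case True
  then have "(i + m - j) mod m = i - j" using assms by (simp add: mod_if)
  then show ?thesis using True assms by simp
next
  case False
  then show ?thesis using assms by simp
qed

lemma sum_exp_sep_cyclic:
  assumes "i < m"
  shows "(\<Sum>j<m. exp_sep m L ((i + m - j) mod m) n) = L n"
proof -
  have "(\<Sum>j<m. exp_sep m L ((i + m - j) mod m) n) = (\<Sum>r<m. exp_sep m L r n)"
    by (rule sum.reindex_bij_witness[where i = "\<lambda>r. (i + m - r) mod m"
          and j = "\<lambda>j. (i + m - j) mod m"])
       (use assms cyclic_difference_involution in auto)
  then show ?thesis using assms by (simp add: sum_exp_sep)
qed

theorem lemma4p1:
  fixes m :: nat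
    and L :: "nat \<Rightarrow> 'a::field_char_0 poly fract"
    and T :: "nat \<Rightarrow> nat \<Rightarrow> 'a poly fract"
  assumes "m > 0"
    and "is_op L" and "\<exists>n. L n \<noteq> 0"
    and "\<forall>i<m. is_op (T i)"
    and "\<forall>j<m. \<forall>n. (\<Sum>i<m. ore_mult (T i) (exp_sep m L ((i + m - j) mod m)) n) = 0"
  shows "\<forall>n. (\<Sum>i<m. T i n) = 0"
proof -
  have "is_op (\<lambda>k. \<Sum>i<m. T i k)"
    using assms(4) by (intro is_op_sum) auto
  moreover have "ore_mult (\<lambda>k. \<Sum>i<m. T i k) L n = 0" for n
  proof -
    have "ore_mult (\<lambda>k. \<Sum>i<m. T i k) L n = (\<Sum>i<m. ore_mult (T i) L n)"
      by (rule ore_mult_sum_left)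
    also have "\<dots> = (\<Sum>i<m. \<Sum>j<m. ore_mult (T i) (exp_sep m L ((i + m - j) mod m)) n)"
      by (intro sum.cong refl) (simp add: sum_exp_sep_cyclic flip: ore_mult_sum_right)
    also have "\<dots> = 0"
      using assms(5) by (subst sum.swap) simp
    finally show ?thesis .
  qed
  ultimately show ?thesis
    using ore_mult_eq_0_imp_left_eq_0[OF _ assms(2,3)] by blast
qed

end
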